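(* Let $G$ be a group with a conjugation-closed generating set $X$ and $g\in\mathrm{Mon}(X)$. Let $\mathbf u,\mathbf v,\mathbf w\in\mathcal F(G,g,\mathbf I)$ with $\mathbf v\subseteq\mathbf u$ and $\mathbf v\subseteq\mathbf w$. Then $\mathbf u\subseteq\mathbf w$ if and only if $\mathbf v^{-1}\mathbf u\subseteq\mathbf v^{-1}\mathbf w$.
   Context: $\mathrm{Mon}(X)$ is the generated submonoid; $\ell(x)$ is the minimal length of a product of elements of $X$ equal to $x$; $x\le y$ if there is $x'\in\mathrm{Mon}(X)$ with $xx'=y$ and $\ell(x)+\ell(x')=\ell(y)$; $[1,g]=\{x:x\le g\}$. A linear factorization of $h$ is $[x_L\ x_1\cdots x_k\ x_R]$ with entries in $\mathrm{Mon}(X)$, $x_1,\dots,x_k\ne1$, lengths summing to $\ell(h)$, product $h$. A weighted linear factorization of $h$ is a function $\mathbf u\colon[0,1]\to G$, trivial at all but finitely many points, such that with $0<s_1<\dots<s_k<1$ the points of $(0,1)$ where $\mathbf u$ is nontrivial, $[\mathbf u(0)\ \mathbf u(s_1)\cdots\mathbf u(s_k)\ \mathbf u(1)]$ is a linear factorization of $h$. $\mathcal F(G,g,\mathbf I)$ is the set of weighted linear factorizations of all $h\in[1,g]$, ordered by $\mathbf v\subseteq\mathbf u$ iff $\mathbf v(r)\le\mathbf u(r)$ for all $r\in[0,1]$. For functions $\mathbf u,\mathbf v\colon[0,1]\to G$, $(\mathbf u\mathbf v)(r)=\mathbf u(r)\mathbf v(r)$ and $\mathbf v^{-1}(r)=(\mathbf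 v(r))^{-1}$; the relation $\subseteq$ is defined by the same pointwise condition for such functions. *)

theory Defs
  imports "HOL-Algebra.Generated_Groups" "HOL-Library.Multiset" Complex_Main
begin

definition wprod :: "('a, 'b) monoid_scheme \<Rightarrow> 'a list \<Rightarrow> 'a" where
  "wprod G ws = foldr (\<lambda>x y. x \<otimes>\<^bsub>G\<^esub> y) ws \<one>\<^bsub>G\<^esub>"

definition Mon :: "('a, 'b) monoid_scheme \<Rightarrow> 'a set \<Rightarrow> 'a set" where
  "Mon G X = {wprod G ws | ws. set ws \<subseteq> X}"

definition len :: "('a, 'b) monoid_scheme \<Rightarrow> 'a set \<Rightarrow> 'a \<Rightarrow> nat" where
  "len G X x = (LEAST n. \<exists>ws. set ws \<subseteq> X \<and> length ws = n \<and> wprod G ws = x)"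

definition ple :: "('a, 'b) monoid_scheme \<Rightarrow> 'a set \<Rightarrow> 'a \<Rightarrow> 'a \<Rightarrow> bool" where
  "ple G X x y = (x \<in> Mon G X \<and> (\<exists>x' \<in> Mon G X. x \<otimes>\<^bsub>G\<^esub> x' = y
                   \<and> len G X x + len G X x' = len G X y))"

text \<open>Linear factorization [x_L x_1 ... x_k x_R] of h, as a list of length k+2.\<close>
definition lin_fact :: "('a, 'b) monoid_scheme \<Rightarrow> 'a set \<Rightarrow> 'a \<Rightarrow> 'a list \<Rightarrow> bool" where
  "lin_fact G X h xs = (2 \<le> length xs \<and> set xs \<subseteq> Mon G X
      \<and> (\<forall>i. 0 < i \<and> i < length xs - 1 \<longrightarrow> xs ! i \<noteq> \<one>\<^bsub>G\<^esub>)
      \<and> sum_list (map (len G X) xs) = len G X h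
      \<and> wprod G xs = h)"

text \<open>Weighted linear factorization of h: a function on [0,1] (only its values on
  [0,1] matter), trivial at all but finitely many points of (0,1).\<close>
definition wlin_fact :: "('a, 'b) monoid_scheme \<Rightarrow> 'a set \<Rightarrow> 'a \<Rightarrow> (real \<Rightarrow> 'a) \<Rightarrow> bool" where
  "wlin_fact G X h u = ((\<forall>r \<in> {0..1}. u r \<in> carrier G)
      \<and> finite {r \<in> {0<..<1}. u r \<noteq> \<one>\<^bsub>G\<^esub>}
      \<and> lin_fact G X h
          (u 0 # map u (sorted_list_of_set {r \<in> {0<..<1}. u r \<noteq> \<one>\<^bsub>G\<^esub>}) @ [u 1]))"

definition FacSet :: "('a, 'b) monoid_scheme \<Rightarrow> 'a set \<Rightarrow> 'a \<Rightarrow> (real \<Rightarrow> 'a) set" where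
  "FacSet G X g = {u. \<exists>h. ple G X h g \<and> wlin_fact G X h u}"

definition fsub :: "('a, 'b) monoid_scheme \<Rightarrow> 'a set \<Rightarrow> (real \<Rightarrow> 'a) \<Rightarrow> (real \<Rightarrow> 'a) \<Rightarrow> bool" where
  "fsub G X v u = (\<forall>r \<in> {0..1}. ple G X (v r) (u r))"

definition fmult :: "('a, 'b) monoid_scheme \<Rightarrow> (real \<Rightarrow> 'a) \<Rightarrow> (real \<Rightarrow> 'a) \<Rightarrow> real \<Rightarrow> 'a" where
  "fmult G u v = (\<lambda>r. u r \<otimes>\<^bsub>G\<^esub> v r)"

definition finv :: "('a, 'b) monoid_scheme \<Rightarrow> (real \<Rightarrow> 'a) \<Rightarrow> real \<Rightarrow> 'a" where
  "finv G v = (\<lambda>r. inv\<^bsub>G\<^esub> (v r))"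

definition conj_closed :: "('a, 'b) monoid_scheme \<Rightarrow> 'a set \<Rightarrow> bool" where
  "conj_closed G X = (\<forall>x \<in> X. \<forall>h \<in> carrier G. h \<otimes>\<^bsub>G\<^esub> x \<otimes>\<^bsub>G\<^esub> inv\<^bsub>G\<^esub> h \<in> X)"

end

theory Submission
  imports Defs
begin

text \<open>Each pointwise comparison only involves three values of the same point, where
  \<open>v r\<close> is a common prefix of \<open>u r\<close> and \<open>w r\<close>. Writing \<open>u r = v r \<cdot> u'\<close> and
  \<open>w r = v r \<cdot> w'\<close> with lengths adding up, a witness \<open>d\<close> for \<open>u r \<le> w r\<close> is exactly a
  witness for \<open>u' \<le> w'\<close>: left multiplication by \<open>v r\<close> is injective and shifts the
  lengths of both sides by the same amount \<open>\<ell>(v r)\<close>.\<close>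

lemma wprod_closed:
  fixes G (structure)
  assumes "monoid G" "set ws \<subseteq> carrier G"
  shows "wprod G ws \<in> carrier G"
  using assms(2)
  by (induction ws) (auto simp: wprod_def monoid.m_closed[OF assms(1)] monoid.one_closed[OF assms(1)])

lemma wprod_append:
  fixes G (structure)
  assumes "monoid G" "set xs \<subseteq> carrier G" "set ys \<subseteq> carrier G"
  shows "wprod G (xs @ ys) = wprod G xs \<otimes> wprod G ys"
  using assms(2)
proof (induction xs)
  case Nil
  then show ?case
    using wprod_closed[OF assms(1,3)] by (simp add: wprod_def monoid.l_one[OF assms(1)])
next
  case (Cons x xs)
  then show ?case
    using wprod_closed[OF assms(1)] assms(3)
    by (simp add: wprod_def monoid.m_assoc[OF assms(1)])
qed

lemma Mon_closed:
  assumes "monoid G" "X \<subseteq> carrier G" "x \<in> Mon G X"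
  shows "x \<in> carrier G"
  using assms wprod_closed unfolding Mon_def by blast

lemma Mon_mult_closed:
  fixes G (structure)
  assumes "monoid G" "X \<subseteq> carrier G" "x \<in> Mon G X" "y \<in> Mon G X"
  shows "x \<otimes> y \<in> Mon G X"
proof -
  obtain xs ys where "set xs \<subseteq> X" "set ys \<subseteq> X" "x = wprod G xs" "y = wprod G ys"
    using assms(3,4) unfolding Mon_def by blast
  then have "x \<otimes> y = wprod G (xs @ ys)" "set (xs @ ys) \<subseteq> X"
    using wprod_append[OF assms(1)] assms(2) by auto
  then show ?thesis unfolding Mon_def by blast
qed

lemma ple_left_quotient:
  fixes G (structure)
  assumes "group G" "X \<subseteq> carrier G" "ple G X a b"
  shows "a \<in> carrier G" "b \<in> Mon G X" "inv a \<otimes> b \<in> Mon G X" "a \<otimes> (inv a \<otimes> b) = b"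
    and "len G X a + len G X (inv a \<otimes> b) = len G X b"
proof -
  interpret group G by fact
  obtain b' where b': "a \<in> Mon G X" "b' \<in> Mon G X" "a \<otimes> b' = b"
      "len G X a + len G X b' = len G X b"
    using assms(3) unfolding ple_def by blast
  have "a \<in> carrier G" "b' \<in> carrier G"
    using Mon_closed[OF monoid_axioms assms(2)] b'(1,2) by auto
  then have "inv a \<otimes> b = b'"
    using b'(3) by (auto simp: m_assoc[symmetric])
  with b' show "a \<in> carrier G" "b \<in> Mon G X" "inv a \<otimes> b \<in> Mon G X" "a \<otimes> (inv a \<otimes> b) = b"
      "len G X a + len G X (inv a \<otimes> b) = len G X b"
    using \<open>a \<in> carrier G\<close> Mon_mult_closed[OF monoid_axioms assms(2)] by auto
qed

lemma ple_cancel_common_prefix: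
  fixes G (structure)
  assumes "group G" "X \<subseteq> carrier G" "ple G X a b" "ple G X a c"
  shows "ple G X b c \<longleftrightarrow> ple G X (inv a \<otimes> b) (inv a \<otimes> c)"
proof -
  interpret group G by fact
  note b = ple_left_quotient[OF assms(1,2,3)]
  note c = ple_left_quotient[OF assms(1,2,4)]
  define b' c' where "b' = inv a \<otimes> b" and "c' = inv a \<otimes> c"
  have b'_closed: "b' \<in> carrier G"
    using Mon_closed[OF monoid_axioms assms(2)] b(3) by (simp add: b'_def)
  have witness_iff: "b \<otimes> d = c \<and> len G X b + len G X d = len G X c
      \<longleftrightarrow> b' \<otimes> d = c' \<and> len G X b' + len G X d = len G X c'"
    if "d \<in> carrier G" for d
  proof -
    have "b \<otimes> d = a \<otimes> (b' \<otimes> d)"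
      using b(1,4) b'_closed that by (simp add: b'_def m_assoc[symmetric])
    moreover have "c = a \<otimes> c'"
      using c(4) by (simp add: c'_def)
    moreover have "c' \<in> carrier G"
      using Mon_closed[OF monoid_axioms assms(2)] c(3) by (simp add: c'_def)
    ultimately show ?thesis
      using b(1,5) c(5) b'_closed that by (auto simp: b'_def c'_def)
  qed
  have "ple G X b c \<longleftrightarrow> ple G X b' c'"
    unfolding ple_def
    using b(2,3) witness_iff Mon_closed[OF monoid_axioms assms(2)]
    by (auto simp: b'_def)
  then show ?thesis by (simp add: b'_def c'_def)
qed

theorem lemma5p7:
  fixes G :: "('a, 'b) monoid_scheme" and X :: "'a set" and g :: 'a
    and u v w :: "real \<Rightarrow> 'a"
  assumes "group G"
    and "X \<subseteq> carrier G"
    and "generate G X = carrier G"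
    and "conj_closed G X"
    and "g \<in> Mon G X"
    and "u \<in> FacSet G X g" and "v \<in> FacSet G X g" and "w \<in> FacSet G X g"
    and "fsub G X v u" and "fsub G X v w"
  shows "fsub G X u w \<longleftrightarrow>
         fsub G X (fmult G (finv G v) u) (fmult G (finv G v) w)"
  using ple_cancel_common_prefix[OF assms(1,2)] assms(9,10)
  unfolding fsub_def fmult_def finv_def
  by (intro ball_cong refl) simp

end
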